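(* Let $\Omega\subset\mathbb{R}^n$ be an open bounded connected domain, let $\rho_\Omega=\max_{\overline\Omega}d_{\partial\Omega}$, and fix $x_0\in\Omega$ with $d_{\partial\Omega}(x_0)=\rho_\Omega$. Then the function $$v(x)=c_0\left[\rho_\Omega^{4/3}-|x-x_0|^{4/3}\right],\qquad c_0=\frac{3^{4/3}}{4},\quad x\in\Omega,$$ (that is, $v(x)=g(\rho_\Omega-|x-x_0|)$ with $g(t)=c_0[\rho_\Omega^{4/3}-(\rho_\Omega-t)^{4/3}]$) is a viscosity solution of $-\Delta_\infty v=1$ in $\Omega$.
   Context: $d_{\partial\Omega}(x)=\min_{y\in\partial\Omega}|x-y|$. $\Delta_\infty\varphi=\langle D^2\varphi\,\nabla\varphi,\nabla\varphi\rangle$. A function $v\in C^0(\Omega)$ is a viscosity solution of $-\Delta_\infty v=1$ if: whenever $\varphi\in C^2(\Omega)$ and $\varphi-v$ has a local minimum at $y$, then $-\Delta_\infty\varphi(y)\le1$; and whenever $\varphi\in C^2(\Omega)$ and $\varphi-v$ has a local maximum at $y$, then $-\Delta_\infty\varphi(y)\ge1$. *)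

theory Defs
  imports "HOL-Analysis.Analysis"
begin

definition dist_bd :: "'a::euclidean_space set \<Rightarrow> 'a \<Rightarrow> real" where
  "dist_bd \<Omega> x = infdist x (frontier \<Omega>)"

definition C2_with :: "'a::euclidean_space set \<Rightarrow> ('a \<Rightarrow> real) \<Rightarrow> ('a \<Rightarrow> 'a) \<Rightarrow> ('a \<Rightarrow> 'a \<Rightarrow> 'a) \<Rightarrow> bool" where
  "C2_with S phi gr H \<longleftrightarrow>
     (\<forall>x\<in>S. (phi has_derivative (\<lambda>h. gr x \<bullet> h)) (at x)) \<and>
     (\<forall>x\<in>S. (gr has_derivative H x) (at x)) \<and>
     (\<forall>h. continuous_on S (\<lambda>x. H x h))"

definition inf_laplacian :: "('a::euclidean_space \<Rightarrow> 'a) \<Rightarrow> ('a \<Rightarrow> 'a \<Rightarrow> 'a) \<Rightarrow> 'a \<Rightarrow> real" where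
  "inf_laplacian gr H y = H y (gr y) \<bullet> gr y"

definition local_min_on :: "'a::metric_space set \<Rightarrow> ('a \<Rightarrow> real) \<Rightarrow> 'a \<Rightarrow> bool" where
  "local_min_on S f y \<longleftrightarrow> (\<exists>e>0. \<forall>x\<in>S \<inter> ball y e. f y \<le> f x)"

definition local_max_on :: "'a::metric_space set \<Rightarrow> ('a \<Rightarrow> real) \<Rightarrow> 'a \<Rightarrow> bool" where
  "local_max_on S f y \<longleftrightarrow> (\<exists>e>0. \<forall>x\<in>S \<inter> ball y e. f x \<le> f y)"

definition visc_sol_inf_lap_1 :: "'a::euclidean_space set \<Rightarrow> ('a \<Rightarrow> real) \<Rightarrow> bool" where
  "visc_sol_inf_lap_1 \<Omega> v \<longleftrightarrow>
     continuous_on \<Omega> v \<and>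
     (\<forall>phi gr H y. C2_with \<Omega> phi gr H \<and> y \<in> \<Omega> \<and> local_min_on \<Omega> (\<lambda>x. phi x - v x) y
        \<longrightarrow> - inf_laplacian gr H y \<le> 1) \<and>
     (\<forall>phi gr H y. C2_with \<Omega> phi gr H \<and> y \<in> \<Omega> \<and> local_max_on \<Omega> (\<lambda>x. phi x - v x) y
        \<longrightarrow> - inf_laplacian gr H y \<ge> 1)"

end

theory Submission
  imports Defs
begin

text \<open>
  Away from \<open>x0\<close> the profile is smooth, and along the line through \<open>y\<close> in the direction of its
  gradient \<open>p\<close> it is a one-variable function whose second derivative at \<open>y\<close> is exactly \<open>-1\<close>;
  this is what determines \<open>c\<^sub>0\<close>. A \<open>C\<^sup>2\<close> function \<open>\<phi>\<close> touching the profile at \<open>y\<close> has gradient \<open>p\<close>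
  there, and comparing second derivatives along that line bounds \<open>\<Delta>\<^sub>\<infinity>\<phi>(y) = \<langle>D\<^sup>2\<phi>(y) p, p\<rangle>\<close> by \<open>-1\<close>
  from the appropriate side. At the vertex \<open>x0\<close> the gradient vanishes, so \<open>\<Delta>\<^sub>\<infinity>\<phi>(x0) = 0\<close> when \<open>\<phi>\<close>
  touches from above, while no \<open>C\<^sup>2\<close> function touches from below, because the profile has a
  downward cusp of order \<open>4/3 < 2\<close> there. The value of \<open>\<rho>\<close> plays no role.
\<close>

section \<open>One-variable calculus\<close>

lemma second_derivative_nonneg_at_local_min:
  fixes f f' :: "real \<Rightarrow> real"
  assumes d: "d > 0"
    and f': "\<And>t. \<bar>t\<bar> < d \<Longrightarrow> (f has_real_derivative f' t) (at t)"
    and f'': "(f' has_real_derivative a) (at 0)"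
    and min: "\<And>t. \<bar>t\<bar> < d \<Longrightarrow> f 0 \<le> f t"
  shows "a \<ge> 0"
proof (rule ccontr)
  assume "\<not> a \<ge> 0"
  then have "a < 0" by simp
  have crit: "f' 0 = 0"
    by (rule DERIV_local_min[OF f'[of 0] d]) (use d min in auto)
  obtain d' where "d' > 0" and decr: "\<And>h. 0 < h \<Longrightarrow> h < d' \<Longrightarrow> f' (0 + h) < f' 0"
    using DERIV_neg_dec_right[OF f'' \<open>a < 0\<close>] by blast
  define e where "e = min d d' / 2"
  have e: "0 < e" "e < d" "e < d'"
    using d \<open>d' > 0\<close> by (auto simp: e_def)
  obtain z where z: "0 < z" "z < e" and mvt: "f e - f 0 = (e - 0) * f' z"
    using MVT2[OF \<open>0 < e\<close>, of f f'] f' e by force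
  have "f' z < 0"
    using decr[of z] z e crit by simp
  then have "f e < f 0"
    using mvt mult_pos_neg[OF \<open>0 < e\<close>, of "f' z"] by simp
  with min[of e] e show False by simp
qed

text \<open>Near 0 the cusp dominates \<open>K t\<^sup>2\<close>, so \<open>- g t - K t\<^sup>2\<close> still has a local minimum at 0,
  although its second derivative \<open>- a - 2 K\<close> is negative once \<open>K > \<bar>a\<bar> / 2\<close>.\<close>
lemma twice_differentiable_not_below_cusp:
  fixes g g' :: "real \<Rightarrow> real"
  assumes d: "d > 0" and c: "c > 0" and \<alpha>: "\<alpha> < 2"
    and g': "\<And>t. \<bar>t\<bar> < d \<Longrightarrow> (g has_real_derivative g' t) (at t)"
    and g'': "(g' has_real_derivative a) (at 0)"
    and below: "\<And>t. \<bar>t\<bar> < d \<Longrightarrow> g t - g 0 \<le> - c * \<bar>t\<bar> powr \<alpha>"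
  shows False
proof -
  define K where "K = \<bar>a\<bar> + 1"
  have K: "K > 0" by (simp add: K_def)
  define \<delta> where "\<delta> = min d ((c / K) powr (1 / (2 - \<alpha>)))"
  have \<delta>: "\<delta> > 0" using d c K by (simp add: \<delta>_def)
  have quadratic_le_cusp: "K * t\<^sup>2 \<le> c * \<bar>t\<bar> powr \<alpha>" if "\<bar>t\<bar> < \<delta>" for t
  proof (cases "t = 0")
    case False
    have "\<bar>t\<bar> powr (2 - \<alpha>) \<le> ((c / K) powr (1 / (2 - \<alpha>))) powr (2 - \<alpha>)"
      using that \<alpha> by (intro powr_mono2) (auto simp: \<delta>_def)
    also have "\<dots> = c / K"
      using c K \<alpha> by (simp add: powr_powr)
    finally have "K * \<bar>t\<bar> powr (2 - \<alpha>) \<le> c"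
      using K by (simp add: field_simps)
    then have "K * \<bar>t\<bar> powr (2 - \<alpha>) * \<bar>t\<bar> powr \<alpha> \<le> c * \<bar>t\<bar> powr \<alpha>"
      by (simp add: mult_right_mono)
    moreover have "\<bar>t\<bar> powr (2 - \<alpha>) * \<bar>t\<bar> powr \<alpha> = t\<^sup>2"
      using False by (simp add: powr_add[symmetric])
    ultimately show ?thesis
      by (simp add: mult.assoc)
  qed simp
  have "- a - 2 * K \<ge> 0"
  proof (rule second_derivative_nonneg_at_local_min[OF \<delta>])
    show "((\<lambda>t. - g t - K * t\<^sup>2) has_real_derivative - g' t - 2 * K * t) (at t)"
      if "\<bar>t\<bar> < \<delta>" for t
      using g'[of t] that by (auto simp: \<delta>_def intro!: derivative_eq_intros)
    show "((\<lambda>t. - g' t - 2 * K * t) has_real_derivative - a - 2 * K) (at 0)"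
      using g'' by (auto intro!: derivative_eq_intros)
    show "- g 0 - K * 0\<^sup>2 \<le> - g t - K * t\<^sup>2" if "\<bar>t\<bar> < \<delta>" for t
      using below[of t] quadratic_le_cusp[OF that] that by (simp add: \<delta>_def)
  qed
  then show False
    by (simp add: K_def)
qed

section \<open>Test functions along lines\<close>

lemma C2_with_uminus:
  assumes "C2_with S \<phi> gr H"
  shows "C2_with S (\<lambda>x. - \<phi> x) (\<lambda>x. - gr x) (\<lambda>x h. - H x h)"
  using assms unfolding C2_with_def
  by (auto intro!: derivative_eq_intros continuous_on_minus)

lemma C2_with_line_derivative:
  assumes "C2_with S \<phi> gr H" "y + t *\<^sub>R p \<in> S"
  shows "((\<lambda>t. \<phi> (y + t *\<^sub>R p)) has_real_derivative gr (y + t *\<^sub>R p) \<bullet> p) (at t)"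
proof -
  have "(\<phi> has_derivative (\<lambda>h. gr (y + t *\<^sub>R p) \<bullet> h)) (at (y + t *\<^sub>R p))"
    using assms unfolding C2_with_def by blast
  moreover have "((\<lambda>t. y + t *\<^sub>R p) has_derivative (\<lambda>s. s *\<^sub>R p)) (at t)"
    by (auto intro!: derivative_eq_intros)
  ultimately have "((\<lambda>t. \<phi> (y + t *\<^sub>R p)) has_derivative (\<lambda>s. gr (y + t *\<^sub>R p) \<bullet> (s *\<^sub>R p))) (at t)"
    using has_derivative_compose by blast
  then show ?thesis
    unfolding has_field_derivative_def by (rule has_derivative_eq_rhs) (auto simp: fun_eq_iff)
qed

lemma C2_with_line_second_derivative:
  assumes "C2_with S \<phi> gr H" "y \<in> S"
  shows "((\<lambda>t. gr (y + t *\<^sub>R p) \<bullet> p) has_real_derivative H y p \<bullet> p) (at 0)"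
proof -
  have gr': "(gr has_derivative H y) (at (y + 0 *\<^sub>R p))"
    using assms unfolding C2_with_def by simp
  have "((\<lambda>t. y + t *\<^sub>R p) has_derivative (\<lambda>s. s *\<^sub>R p)) (at 0)"
    by (auto intro!: derivative_eq_intros)
  from has_derivative_compose[OF this gr']
  have "((\<lambda>t. gr (y + t *\<^sub>R p)) has_derivative (\<lambda>s. H y (s *\<^sub>R p))) (at 0)"
    by simp
  then have "((\<lambda>t. gr (y + t *\<^sub>R p) \<bullet> p) has_derivative (\<lambda>s. H y (s *\<^sub>R p) \<bullet> p)) (at 0)"
    by (auto intro!: derivative_eq_intros)
  then show ?thesis
    unfolding has_field_derivative_def
    by (rule has_derivative_eq_rhs)
      (auto simp: fun_eq_iff linear_scale[OF has_derivative_linear[OF gr']])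
qed

lemma local_min_on_open_ball:
  assumes "open S" "y \<in> S" "local_min_on S f y"
  obtains e where "e > 0" "ball y e \<subseteq> S" "\<And>x. x \<in> ball y e \<Longrightarrow> f y \<le> f x"
proof -
  obtain e1 where "e1 > 0" "\<forall>x\<in>S \<inter> ball y e1. f y \<le> f x"
    using assms(3) unfolding local_min_on_def by blast
  moreover obtain e2 where "e2 > 0" "ball y e2 \<subseteq> S"
    using assms(1,2) open_contains_ball by blast
  ultimately show ?thesis
    by (intro that[of "min e1 e2"]) auto
qed

lemma local_max_on_iff_local_min_on_uminus:
  "local_max_on S f y \<longleftrightarrow> local_min_on S (\<lambda>x. - f x) y"
  unfolding local_max_on_def local_min_on_def by simp

lemma gradient_eq_at_local_min:
  fixes v :: "'a::euclidean_space \<Rightarrow> real"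
  assumes "open S" "C2_with S \<phi> gr H" "y \<in> S"
    and min: "local_min_on S (\<lambda>x. \<phi> x - v x) y"
    and v': "(v has_derivative (\<lambda>h. q \<bullet> h)) (at y)"
  shows "gr y = q"
proof -
  have "(\<phi> has_derivative (\<lambda>h. gr y \<bullet> h)) (at y)"
    using assms(2,3) unfolding C2_with_def by blast
  from has_derivative_diff[OF this v']
  have D: "((\<lambda>x. \<phi> x - v x) has_derivative (\<lambda>h. (gr y - q) \<bullet> h)) (at y)"
    by (simp add: inner_diff_left)
  obtain e where "e > 0" "ball y e \<subseteq> S" "\<And>x. x \<in> ball y e \<Longrightarrow> \<phi> y - v y \<le> \<phi> x - v x"
    using local_min_on_open_ball[OF assms(1,3) min] by blast
  then have "eventually (\<lambda>x. \<phi> y - v y \<le> \<phi> x - v x) (at y)"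
    unfolding eventually_at by (auto simp: dist_commute)
  from fun_cong[OF has_derivative_local_min[OF D this], of "gr y - q"] show ?thesis
    by simp
qed

lemma gradient_eq_at_local_max:
  fixes v :: "'a::euclidean_space \<Rightarrow> real"
  assumes "open S" "C2_with S \<phi> gr H" "y \<in> S"
    and "local_max_on S (\<lambda>x. \<phi> x - v x) y"
    and "(v has_derivative (\<lambda>h. q \<bullet> h)) (at y)"
  shows "gr y = q"
proof -
  have "local_min_on S (\<lambda>x. - \<phi> x - - v x) y"
    using assms(4) unfolding local_max_on_iff_local_min_on_uminus by simp
  moreover have "((\<lambda>x. - v x) has_derivative (\<lambda>h. (- q) \<bullet> h)) (at y)"
    using assms(5) by (auto intro!: derivative_eq_intros)
  ultimately have "- gr y = - q"
    by (rule gradient_eq_at_local_min[OF assms(1) C2_with_uminus[OF assms(2)] assms(3)])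
  then show ?thesis by simp
qed

lemma hessian_lower_bound_at_local_min:
  fixes v :: "'a::euclidean_space \<Rightarrow> real"
  assumes "open S" and C2: "C2_with S \<phi> gr H" and "y \<in> S"
    and min: "local_min_on S (\<lambda>x. \<phi> x - v x) y"
    and d: "d > 0"
    and v_line: "\<And>t. \<bar>t\<bar> < d \<Longrightarrow> v (y + t *\<^sub>R p) = w t"
    and w': "\<And>t. \<bar>t\<bar> < d \<Longrightarrow> (w has_real_derivative w' t) (at t)"
    and w'': "(w' has_real_derivative b) (at 0)"
  shows "b \<le> H y p \<bullet> p"
proof -
  obtain e where "e > 0" and ball: "ball y e \<subseteq> S"
    and min_ball: "\<And>x. x \<in> ball y e \<Longrightarrow> \<phi> y - v y \<le> \<phi> x - v x"
    using local_min_on_open_ball[OF \<open>open S\<close> \<open>y \<in> S\<close> min] by blast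
  define \<delta> where "\<delta> = min d (e / (norm p + 1))"
  have "\<delta> > 0"
    using d \<open>e > 0\<close> by (simp add: \<delta>_def add_nonneg_pos)
  have in_ball: "y + t *\<^sub>R p \<in> ball y e" if "\<bar>t\<bar> < \<delta>" for t
  proof -
    have "\<bar>t\<bar> * (norm p + 1) < e"
      using that by (simp add: \<delta>_def pos_less_divide_eq add_nonneg_pos)
    moreover have "\<bar>t\<bar> * norm p \<le> \<bar>t\<bar> * (norm p + 1)"
      by (simp add: mult_left_mono)
    ultimately show ?thesis
      by (simp add: dist_norm)
  qed
  have "H y p \<bullet> p - b \<ge> 0"
  proof (rule second_derivative_nonneg_at_local_min[OF \<open>\<delta> > 0\<close>])
    show "((\<lambda>t. \<phi> (y + t *\<^sub>R p) - w t) has_real_derivative gr (y + t *\<^sub>R p) \<bullet> p - w' t) (at t)"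
      if "\<bar>t\<bar> < \<delta>" for t
      using C2_with_line_derivative[OF C2] in_ball[OF that] ball w'[of t] that
      by (auto simp: \<delta>_def intro!: DERIV_diff)
    show "((\<lambda>t. gr (y + t *\<^sub>R p) \<bullet> p - w' t) has_real_derivative H y p \<bullet> p - b) (at 0)"
      using C2_with_line_second_derivative[OF C2 \<open>y \<in> S\<close>] w'' by (rule DERIV_diff)
    show "\<phi> (y + 0 *\<^sub>R p) - w 0 \<le> \<phi> (y + t *\<^sub>R p) - w t" if "\<bar>t\<bar> < \<delta>" for t
      using min_ball[OF in_ball[OF that]] v_line[of 0] v_line[of t] that d
      by (simp add: \<delta>_def)
  qed
  then show ?thesis by simp
qed

lemma hessian_upper_bound_at_local_max:
  fixes v :: "'a::euclidean_space \<Rightarrow> real"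
  assumes "open S" and C2: "C2_with S \<phi> gr H" and "y \<in> S"
    and max: "local_max_on S (\<lambda>x. \<phi> x - v x) y"
    and "d > 0"
    and v_line: "\<And>t. \<bar>t\<bar> < d \<Longrightarrow> v (y + t *\<^sub>R p) = w t"
    and w': "\<And>t. \<bar>t\<bar> < d \<Longrightarrow> (w has_real_derivative w' t) (at t)"
    and w'': "(w' has_real_derivative b) (at 0)"
  shows "H y p \<bullet> p \<le> b"
proof -
  have "- b \<le> - H y p \<bullet> p"
  proof (rule hessian_lower_bound_at_local_min[OF \<open>open S\<close> C2_with_uminus[OF C2] \<open>y \<in> S\<close> _ \<open>d > 0\<close>])
    show "local_min_on S (\<lambda>x. - \<phi> x - - v x) y"
      using max unfolding local_max_on_iff_local_min_on_uminus by simp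
    show "- v (y + t *\<^sub>R p) = - w t" if "\<bar>t\<bar> < d" for t
      using v_line[OF that] by simp
    show "((\<lambda>t. - w t) has_real_derivative - w' t) (at t)" if "\<bar>t\<bar> < d" for t
      using w'[OF that] by (rule DERIV_minus)
    show "((\<lambda>t. - w' t) has_real_derivative - b) (at 0)"
      using w'' by (rule DERIV_minus)
  qed
  then show ?thesis by simp
qed

section \<open>The cusp profile\<close>

lemma has_derivative_norm_powr:
  fixes x0 y :: "'a::real_inner"
  assumes "y \<noteq> x0"
  shows "((\<lambda>x. norm (x - x0) powr a) has_derivative
           (\<lambda>h. ((a * norm (y - x0) powr (a - 2)) *\<^sub>R (y - x0)) \<bullet> h)) (at y)"
proof -
  define n where "n = norm (y - x0)"
  have "n > 0" using assms by (simp add: n_def)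
  have "((\<lambda>x. x - x0) has_derivative (\<lambda>h. h)) (at y)"
    by (auto intro!: derivative_eq_intros)
  from has_derivative_compose[OF this has_derivative_norm] assms
  have "((\<lambda>x. norm (x - x0)) has_derivative (\<lambda>h. h \<bullet> sgn (y - x0))) (at y)"
    by simp
  moreover have "((\<lambda>z. z powr a) has_real_derivative a * n powr (a - 1)) (at (norm (y - x0)))"
    using has_real_derivative_powr[OF \<open>n > 0\<close>] by (simp add: n_def)
  ultimately have "((\<lambda>x. norm (x - x0) powr a) has_derivative (\<lambda>h. h \<bullet> sgn (y - x0) * (a * n powr (a - 1)))) (at y)"
    by (rule DERIV_compose_FDERIV[rotated])
  then show ?thesis
  proof (rule has_derivative_eq_rhs)
    show "(\<lambda>h. h \<bullet> sgn (y - x0) * (a * n powr (a - 1))) = (\<lambda>h. ((a * norm (y - x0) powr (a - 2)) *\<^sub>R (y - x0)) \<bullet> h)"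
    proof
      fix h
      have "n powr (a - 1) = n * n powr (a - 2)"
        using powr_mult_base[of n "a - 2"] \<open>n > 0\<close> by simp
      moreover have "h \<bullet> sgn (y - x0) = ((y - x0) \<bullet> h) / n"
        by (simp add: sgn_div_norm n_def inner_commute divide_inverse)
      ultimately show "h \<bullet> sgn (y - x0) * (a * n powr (a - 1))
          = ((a * norm (y - x0) powr (a - 2)) *\<^sub>R (y - x0)) \<bullet> h"
        using \<open>n > 0\<close> by (simp add: n_def)
    qed
  qed
qed

lemma has_derivative_norm_powr_center:
  fixes x0 :: "'a::real_normed_vector"
  assumes "a > 1"
  shows "((\<lambda>x. norm (x - x0) powr a) has_derivative (\<lambda>h. 0)) (at x0)"
  unfolding has_derivative_at_alt
proof (intro conjI allI impI)
  fix e :: real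
  assume "e > 0"
  show "\<exists>d>0. \<forall>y. norm (y - x0) < d \<longrightarrow>
          norm (norm (y - x0) powr a - norm (x0 - x0) powr a - 0) \<le> e * norm (y - x0)"
  proof (intro exI[of _ "e powr (1 / (a - 1))"] conjI allI impI)
    fix y
    assume y: "norm (y - x0) < e powr (1 / (a - 1))"
    define n where "n = norm (y - x0)"
    have "n powr (a - 1) \<le> (e powr (1 / (a - 1))) powr (a - 1)"
      using y assms by (intro powr_mono2) (auto simp: n_def)
    also have "\<dots> = e"
      using \<open>e > 0\<close> assms by (simp add: powr_powr)
    finally have "n * n powr (a - 1) \<le> n * e"
      by (simp add: n_def mult_left_mono)
    moreover have "n powr a = n * n powr (a - 1)"
      using powr_mult_base[of n "a - 1"] by (cases "n = 0") (simp_all add: n_def)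
    ultimately show "norm (norm (y - x0) powr a - norm (x0 - x0) powr a - 0) \<le> e * norm (y - x0)"
      by (simp add: n_def mult.commute)
  qed (use \<open>e > 0\<close> in simp)
qed simp

lemma continuous_on_norm_powr:
  fixes x0 :: "'a::real_normed_vector"
  assumes "a > 0"
  shows "continuous_on S (\<lambda>x. norm (x - x0) powr a)"
  using assms by (intro continuous_on_powr' continuous_intros) auto

lemma norm_powr_along_radius:
  fixes x0 y :: "'a::real_normed_vector"
  assumes "k * t < 1"
  shows "norm (y + t *\<^sub>R (- k *\<^sub>R (y - x0)) - x0) powr a = norm (y - x0) powr a * (1 - k * t) powr a"
proof -
  have "y + t *\<^sub>R (- k *\<^sub>R (y - x0)) - x0 = (1 - k * t) *\<^sub>R (y - x0)"
    by (simp add: algebra_simps)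
  then show ?thesis
    using assms by (simp add: powr_mult mult.commute)
qed

lemma has_real_derivative_affine_powr:
  fixes k t :: real
  assumes "k * t < 1"
  shows "((\<lambda>t. (1 - k * t) powr a) has_real_derivative - a * k * (1 - k * t) powr (a - 1)) (at t)"
proof -
  have "((\<lambda>t. 1 - k * t) has_real_derivative - k) (at t)"
    by (auto intro!: derivative_eq_intros)
  from DERIV_fun_powr[OF this, of a] assms show ?thesis
    by (simp add: algebra_simps)
qed

definition cusp_profile :: "'a::real_normed_vector \<Rightarrow> real \<Rightarrow> 'a \<Rightarrow> real" where
  "cusp_profile x0 R x = 3 powr (4/3) / 4 * (R - norm (x - x0) powr (4/3))"

definition cusp_profile_gradient :: "'a::real_normed_vector \<Rightarrow> 'a \<Rightarrow> 'a" where
  "cusp_profile_gradient x0 y = - (3 powr (1/3) * norm (y - x0) powr (-2/3)) *\<^sub>R (y - x0)"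

lemma continuous_on_cusp_profile: "continuous_on S (cusp_profile x0 R)"
  unfolding cusp_profile_def by (intro continuous_intros continuous_on_norm_powr) simp

lemma has_derivative_cusp_profile:
  fixes x0 y :: "'a::real_inner"
  assumes "y \<noteq> x0"
  shows "(cusp_profile x0 R has_derivative (\<lambda>h. cusp_profile_gradient x0 y \<bullet> h)) (at y)"
proof -
  have "3 powr (4/3) / 4 * (4/3) = (3 powr (1/3) :: real)"
    using powr_mult_base[of 3 "1/3"] by simp
  with has_derivative_norm_powr[OF assms, of "4/3"] show ?thesis
    unfolding cusp_profile_def cusp_profile_gradient_def
    by (auto intro!: derivative_eq_intros elim!: has_derivative_eq_rhs simp: fun_eq_iff)
qed

lemma has_derivative_cusp_profile_center:
  fixes x0 :: "'a::real_inner"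
  shows "(cusp_profile x0 R has_derivative (\<lambda>h. 0 \<bullet> h)) (at x0)"
proof -
  have "((\<lambda>x. 3 powr (4/3) / 4 * (R - norm (x - x0) powr (4/3))) has_derivative
          (\<lambda>h. 3 powr (4/3) / 4 * (0 - 0))) (at x0)"
    by (intro has_derivative_mult_right has_derivative_diff has_derivative_const
        has_derivative_norm_powr_center) simp
  then show ?thesis
    unfolding cusp_profile_def by simp
qed

text \<open>With \<open>r = |y - x0|\<close> and \<open>k = 3\<^sup>1\<^sup>/\<^sup>3 r\<^sup>-\<^sup>2\<^sup>/\<^sup>3\<close>, the witness is
  \<open>w t = c\<^sub>0 (R - r\<^sup>4\<^sup>/\<^sup>3 (1 - k t)\<^sup>4\<^sup>/\<^sup>3)\<close>, whose second derivative at 0 is \<open>- (4/9) c\<^sub>0 r\<^sup>4\<^sup>/\<^sup>3 k\<^sup>2 = -1\<close>.\<close>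
lemma cusp_profile_along_gradient:
  fixes x0 y :: "'a::euclidean_space"
  assumes "y \<noteq> x0"
  obtains d w w' where "d > 0"
    and "\<And>t. \<bar>t\<bar> < d \<Longrightarrow> cusp_profile x0 R (y + t *\<^sub>R cusp_profile_gradient x0 y) = w t"
    and "\<And>t. \<bar>t\<bar> < d \<Longrightarrow> (w has_real_derivative w' t) (at t)"
    and "(w' has_real_derivative -1) (at 0)"
proof -
  define r where "r = norm (y - x0)"
  define k where "k = 3 powr (1/3) * r powr (-2/3)"
  define c where "c = 3 powr (4/3) / 4 * r powr (4/3)"
  have "r > 0" using assms by (simp add: r_def)
  then have "k > 0" by (simp add: k_def)
  define w where "w = (\<lambda>t. 3 powr (4/3) / 4 * R - c * (1 - k * t) powr (4/3))"
  define w' where "w' = (\<lambda>t. - c * (- (4/3) * k * (1 - k * t) powr (1/3)))"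
  show ?thesis
  proof
    show "1 / k > 0" using \<open>k > 0\<close> by simp
    have "k * t < 1" if "\<bar>t\<bar> < 1 / k" for t
      using that \<open>k > 0\<close> by (simp add: field_simps abs_less_iff)
    then show "cusp_profile x0 R (y + t *\<^sub>R cusp_profile_gradient x0 y) = w t"
      and "(w has_real_derivative w' t) (at t)" if "\<bar>t\<bar> < 1 / k" for t
      using norm_powr_along_radius[of k t y x0 "4/3"]
        has_real_derivative_affine_powr[of k t "4/3"] that
      by (auto simp: cusp_profile_def cusp_profile_gradient_def w_def w'_def c_def k_def r_def algebra_simps
          intro!: derivative_eq_intros)
    have "c * (4/3) * k * (1/3) * k
        = (3 powr (4/3) * 3 powr (1/3) * 3 powr (1/3)) * (r powr (4/3) * r powr (-2/3) * r powr (-2/3)) / 9"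
      unfolding c_def k_def by (simp add: ac_simps)
    also have "\<dots> = 1"
      using \<open>r > 0\<close> by (simp add: powr_add[symmetric])
    finally have "c * (4/3) * k * (1/3) * k = 1" .
    with has_real_derivative_affine_powr[of k 0 "1/3"] show "(w' has_real_derivative -1) (at 0)"
      unfolding w'_def by (auto intro!: derivative_eq_intros elim!: DERIV_cong)
  qed
qed

lemma cusp_profile_viscosity_subsolution:
  fixes x0 y :: "'a::euclidean_space"
  assumes "open S" "C2_with S \<phi> gr H" "y \<in> S"
    and min: "local_min_on S (\<lambda>x. \<phi> x - cusp_profile x0 R x) y"
  shows "- inf_laplacian gr H y \<le> 1"
proof (cases "y = x0")
  case True
  have "(cusp_profile x0 R has_derivative (\<lambda>h. 0 \<bullet> h)) (at y)"
    unfolding True by (rule has_derivative_cusp_profile_center)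
  then have "gr y = 0"
    by (rule gradient_eq_at_local_min[OF assms])
  then show ?thesis
    by (simp add: inf_laplacian_def)
next
  case False
  define p where "p = cusp_profile_gradient x0 y"
  have "gr y = p"
    unfolding p_def by (rule gradient_eq_at_local_min[OF assms has_derivative_cusp_profile[OF False]])
  moreover obtain d w w' where "d > 0"
    and "\<And>t. \<bar>t\<bar> < d \<Longrightarrow> cusp_profile x0 R (y + t *\<^sub>R p) = w t"
    and "\<And>t. \<bar>t\<bar> < d \<Longrightarrow> (w has_real_derivative w' t) (at t)"
    and "(w' has_real_derivative -1) (at 0)"
    using cusp_profile_along_gradient[OF False] unfolding p_def by blast
  then have "-1 \<le> H y p \<bullet> p"
    by (rule hessian_lower_bound_at_local_min[OF assms])
  ultimately show ?thesis
    by (simp add: inf_laplacian_def)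
qed

lemma not_local_max_at_cusp_profile_vertex:
  fixes x0 :: "'a::euclidean_space"
  assumes "open S" and C2: "C2_with S \<phi> gr H" and "x0 \<in> S"
  shows "\<not> local_max_on S (\<lambda>x. \<phi> x - cusp_profile x0 R x) x0"
proof
  assume "local_max_on S (\<lambda>x. \<phi> x - cusp_profile x0 R x) x0"
  then have "local_min_on S (\<lambda>x. - (\<phi> x - cusp_profile x0 R x)) x0"
    by (simp only: local_max_on_iff_local_min_on_uminus)
  then obtain e where "e > 0" and ball: "ball x0 e \<subseteq> S"
    and max: "\<And>x. x \<in> ball x0 e \<Longrightarrow> - (\<phi> x0 - cusp_profile x0 R x0) \<le> - (\<phi> x - cusp_profile x0 R x)"
    using local_min_on_open_ball[OF \<open>open S\<close> \<open>x0 \<in> S\<close>] by blast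
  obtain u :: 'a where "u \<in> Basis"
    using nonempty_Basis by blast
  then have "norm u = 1" by simp
  then have in_ball: "x0 + t *\<^sub>R u \<in> ball x0 e" if "\<bar>t\<bar> < e" for t
    using that by (simp add: dist_norm)
  show False
  proof (rule twice_differentiable_not_below_cusp[OF \<open>e > 0\<close>])
    show "((\<lambda>t. \<phi> (x0 + t *\<^sub>R u)) has_real_derivative gr (x0 + t *\<^sub>R u) \<bullet> u) (at t)"
      if "\<bar>t\<bar> < e" for t
      using C2_with_line_derivative[OF C2] in_ball[OF that] ball by blast
    show "((\<lambda>t. gr (x0 + t *\<^sub>R u) \<bullet> u) has_real_derivative H x0 u \<bullet> u) (at 0)"
      by (rule C2_with_line_second_derivative[OF C2 \<open>x0 \<in> S\<close>])
    show "\<phi> (x0 + t *\<^sub>R u) - \<phi> (x0 + 0 *\<^sub>R u) \<le> - (3 powr (4/3) / 4) * \<bar>t\<bar> powr (4/3)"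
      if "\<bar>t\<bar> < e" for t
      using max[OF in_ball[OF that]] \<open>norm u = 1\<close>
      by (simp add: cusp_profile_def field_simps)
  qed simp_all
qed

lemma cusp_profile_viscosity_supersolution:
  fixes x0 y :: "'a::euclidean_space"
  assumes "open S" "C2_with S \<phi> gr H" "y \<in> S"
    and max: "local_max_on S (\<lambda>x. \<phi> x - cusp_profile x0 R x) y"
  shows "- inf_laplacian gr H y \<ge> 1"
proof -
  have "y \<noteq> x0"
    using not_local_max_at_cusp_profile_vertex[OF assms(1-3)] max by blast
  define p where "p = cusp_profile_gradient x0 y"
  have "gr y = p"
    unfolding p_def
    by (rule gradient_eq_at_local_max[OF assms has_derivative_cusp_profile[OF \<open>y \<noteq> x0\<close>]])
  moreover obtain d w w' where "d > 0"
    and "\<And>t. \<bar>t\<bar> < d \<Longrightarrow> cusp_profile x0 R (y + t *\<^sub>R p) = w t"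
    and "\<And>t. \<bar>t\<bar> < d \<Longrightarrow> (w has_real_derivative w' t) (at t)"
    and "(w' has_real_derivative -1) (at 0)"
    using cusp_profile_along_gradient[OF \<open>y \<noteq> x0\<close>] unfolding p_def by blast
  then have "H y p \<bullet> p \<le> -1"
    by (rule hessian_upper_bound_at_local_max[OF assms])
  ultimately show ?thesis
    by (simp add: inf_laplacian_def)
qed

theorem lemma4:
  fixes \<Omega> :: "'a::euclidean_space set" and x0 :: 'a and \<rho> c0 :: real
  assumes "open \<Omega>" and "bounded \<Omega>" and "connected \<Omega>"
    and "\<rho> = (SUP x\<in>closure \<Omega>. dist_bd \<Omega> x)"
    and "x0 \<in> \<Omega>" and "dist_bd \<Omega> x0 = \<rho>"
    and "c0 = 3 powr (4/3) / 4"
  shows "visc_sol_inf_lap_1 \<Omega> (\<lambda>x. c0 * (\<rho> powr (4/3) - norm (x - x0) powr (4/3)))"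
proof -
  have "(\<lambda>x. c0 * (\<rho> powr (4/3) - norm (x - x0) powr (4/3))) = cusp_profile x0 (\<rho> powr (4/3))"
    using \<open>c0 = 3 powr (4/3) / 4\<close> by (simp add: fun_eq_iff cusp_profile_def)
  moreover have "visc_sol_inf_lap_1 \<Omega> (cusp_profile x0 R)" for R
    unfolding visc_sol_inf_lap_1_def
    by (intro conjI allI impI continuous_on_cusp_profile)
      (use cusp_profile_viscosity_subsolution[OF \<open>open \<Omega>\<close>]
        cusp_profile_viscosity_supersolution[OF \<open>open \<Omega>\<close>] in blast)+
  ultimately show ?thesis
    by simp
qed

end
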